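(* Let $|\psi\rangle=\alpha|0\rangle+\beta|1\rangle$ be a pure qubit state and let $R=-|\alpha|^2\log_2|\alpha|^2-|\beta|^2\log_2|\beta|^2=R_I(|\psi\rangle)$. For every $\varepsilon>0$ there is $n_0$ such that for all $n\ge n_0$ there exists an incoherent operation on $(\mathbb C^2)^{\otimes n}$ with respect to the product computational basis, with Kraus operators $\{K_j\}$, such that for each outcome $j$ with $p_j=\|K_j|\psi\rangle^{\otimes n}\|^2>0$ the normalized post-measurement state $K_j|\psi\rangle^{\otimes n}/\sqrt{p_j}$ is, up to an incoherent relabeling of basis states (equivalently, a permutation of computational basis vectors), the state $|\Psi_2\rangle^{\otimes r_j}\otimes|0\cdots0\rangle$ for some integer $r_j\ge0$, where $|\Psi_2\rangle=(|0\rangle+|1\rangle)/\sqrt2$, and the expected number of distilled copies satisfies $\sum_jp_jr_j\ge n(R-\varepsilon)$.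
   Context: An incoherent operation with respect to an orthonormal basis $\{|i\rangle\}$ is a CPTP map $\Phi(\rho)=\sum_jK_j\rho K_j^\dagger$ with $\sum_jK_j^\dagger K_j=\mathbb 1$ such that $K_j\delta K_j^\dagger$ is diagonal in that basis whenever $\delta$ is diagonal in that basis. On $(\mathbb C^2)^{\otimes n}$ the basis is the product computational basis $\{|x_1\cdots x_n\rangle: x_k\in\{0,1\}\}$. For a pure state $|\phi\rangle=\sum_ia_i|i\rangle$, $R_I(|\phi\rangle)=-\sum_i|a_i|^2\log_2|a_i|^2$. *)

theory Defs
  imports "HOL-Analysis.Analysis" "HOL-Combinatorics.Permutations"
begin

text \<open>The n-qubit space is C^(2^n); the product computational basis
vector |x_1 ... x_n> is encoded by the natural number x < 2^n whose k-th binary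
digit (k < n) is the value of qubit k. Vectors are functions nat => complex
(only indices below the dimension matter); operators on C^N are functions
nat => nat => complex (row, column), indices below N. A finite family of
Kraus operators is K :: nat => (nat => nat => complex) indexed by j < m.\<close>

definition qbit :: "nat \<Rightarrow> nat \<Rightarrow> bool" where
  "qbit x k \<longleftrightarrow> odd (x div 2 ^ k)"

definition op_apply :: "nat \<Rightarrow> (nat \<Rightarrow> nat \<Rightarrow> complex) \<Rightarrow> (nat \<Rightarrow> complex) \<Rightarrow> (nat \<Rightarrow> complex)" where
  "op_apply N A v = (\<lambda>a. \<Sum>c<N. A a c * v c)"

definition sq_norm :: "nat \<Rightarrow> (nat \<Rightarrow> complex) \<Rightarrow> real" where
  "sq_norm N v = (\<Sum>a<N. (cmod (v a))\<^sup>2)"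

definition is_diag :: "nat \<Rightarrow> (nat \<Rightarrow> nat \<Rightarrow> complex) \<Rightarrow> bool" where
  "is_diag N D \<longleftrightarrow> (\<forall>a<N. \<forall>b<N. a \<noteq> b \<longrightarrow> D a b = 0)"

definition conj_by :: "nat \<Rightarrow> (nat \<Rightarrow> nat \<Rightarrow> complex) \<Rightarrow> (nat \<Rightarrow> nat \<Rightarrow> complex) \<Rightarrow> (nat \<Rightarrow> nat \<Rightarrow> complex)" where
  "conj_by N K D = (\<lambda>a b. \<Sum>c<N. \<Sum>e<N. K a c * D c e * cnj (K b e))"

definition kraus_complete :: "nat \<Rightarrow> nat \<Rightarrow> (nat \<Rightarrow> nat \<Rightarrow> nat \<Rightarrow> complex) \<Rightarrow> bool" where
  "kraus_complete N m K \<longleftrightarrow>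
     (\<forall>a<N. \<forall>b<N. (\<Sum>j<m. \<Sum>i<N. cnj (K j i a) * K j i b) = (if a = b then 1 else 0))"

definition incoherent_op :: "nat \<Rightarrow> nat \<Rightarrow> (nat \<Rightarrow> nat \<Rightarrow> nat \<Rightarrow> complex) \<Rightarrow> bool" where
  "incoherent_op N m K \<longleftrightarrow> kraus_complete N m K \<and>
     (\<forall>j<m. \<forall>D. is_diag N D \<longrightarrow> is_diag N (conj_by N (K j) D))"

definition prod_state :: "nat \<Rightarrow> complex \<Rightarrow> complex \<Rightarrow> (nat \<Rightarrow> complex)" where
  "prod_state n \<alpha> \<beta> = (\<lambda>x. \<Prod>k<n. if qbit x k then \<beta> else \<alpha>)"

text \<open>|Psi_2>^{tensor r} (on qubits 0..r-1) tensor |0...0> (on qubits r..n-1),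
as a vector of C^(2^n) (assuming r \<le> n).\<close>
definition maxcoh_padded :: "nat \<Rightarrow> (nat \<Rightarrow> complex)" where
  "maxcoh_padded r = (\<lambda>y. if y < 2 ^ r then complex_of_real ((1 / sqrt 2) ^ r) else 0)"

definition R_I :: "nat \<Rightarrow> (nat \<Rightarrow> complex) \<Rightarrow> real" where
  "R_I N a = - (\<Sum>i<N. if a i = 0 then 0 else (cmod (a i))\<^sup>2 * log 2 ((cmod (a i))\<^sup>2))"

definition qubit_vec :: "complex \<Rightarrow> complex \<Rightarrow> (nat \<Rightarrow> complex)" where
  "qubit_vec \<alpha> \<beta> = (\<lambda>i. if i = 0 then \<alpha> else \<beta>)"

end

theory Submission
  imports Defs "HOL-Library.Nat_Bijection" "HOL-Library.Discrete_Functions" "HOL-Real_Asymp.Real_Asymp"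
begin

text \<open>On the class of computational basis states of Hamming weight \<open>k\<close> (\<open>n choose k\<close> states)
  all amplitudes of the product state have the same modulus. Cut each class into blocks of
  \<open>2 ^ a k\<close> states and measure which block the state lies in, with diagonal (hence incoherent)
  Kraus operators that also remove the phases: every outcome is a uniform superposition of
  \<open>2 ^ a k\<close> basis states, i.e. \<open>a k\<close> maximally coherent qubits after relabelling the basis.
  For \<open>a k = \<lfloor>log\<^sub>2 (n choose k)\<rfloor> - t\<close> at most a fraction \<open>2\<^sup>-\<^sup>t\<close> of each class is wasted, and
  since the binomial distribution has entropy at most \<open>log\<^sub>2 (n + 1)\<close>, the expected yield is at
  least \<open>(1 - 2\<^sup>-\<^sup>t) (n H - log\<^sub>2 (n + 1) - t - 1)\<close>, where \<open>H\<close> is the binary entropy of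
  \<open>(|\<alpha>|\<^sup>2, |\<beta>|\<^sup>2)\<close>, i.e. \<open>R\<^sub>I(|\<psi>\<rangle>)\<close>. Choosing \<open>t\<close> and then \<open>n\<close> large gives the rate
  \<open>R\<^sub>I(|\<psi>\<rangle>) - \<epsilon>\<close>.\<close>

definition maxcoh_outcome :: "nat \<Rightarrow> (nat \<Rightarrow> complex) \<Rightarrow> nat \<Rightarrow> bool" where
  "maxcoh_outcome n w r \<longleftrightarrow> sq_norm (2 ^ n) w > 0 \<longrightarrow>
     r \<le> n \<and>
     (\<exists>\<sigma>. \<sigma> permutes {..<2 ^ n} \<and>
        (\<forall>y<2 ^ n. w (\<sigma> y) / complex_of_real (sqrt (sq_norm (2 ^ n) w)) = maxcoh_padded r y))"

lemma permutes_image_eq_equicardinal: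
  assumes "finite A" "S \<subseteq> A" "B \<subseteq> A" "card S = card B"
  shows "\<exists>\<sigma>. \<sigma> permutes A \<and> \<sigma> ` S = B"
proof -
  have fin: "finite S" "finite B"
    using finite_subset assms(1-3) by blast+
  obtain f where f: "bij_betw f S B"
    using finite_same_card_bij[OF fin assms(4)] by blast
  have "card (A - S) = card (A - B)"
    using assms fin by (simp add: card_Diff_subset)
  then obtain g where g: "bij_betw g (A - S) (A - B)"
    using finite_same_card_bij[of "A - S" "A - B"] assms(1) by blast
  define \<sigma> where "\<sigma> x = (if x \<in> S then f x else if x \<in> A then g x else x)" for x
  have \<sigma>_S: "bij_betw \<sigma> S B"
    using f by (rule bij_betw_cong[THEN iffD1, rotated]) (simp add: \<sigma>_def)
  moreover have "bij_betw \<sigma> (A - S) (A - B)"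
    using g by (rule bij_betw_cong[THEN iffD1, rotated]) (simp add: \<sigma>_def)
  ultimately have "bij_betw \<sigma> (S \<union> (A - S)) (B \<union> (A - B))"
    by (rule bij_betw_combine) blast
  moreover have "S \<union> (A - S) = A" "B \<union> (A - B) = A"
    using assms(2,3) by blast+
  moreover have "{x. \<sigma> x \<noteq> x} \<subseteq> A"
    using assms(2) by (auto simp: \<sigma>_def)
  ultimately have "\<sigma> permutes A"
    by (simp add: permutes_altdef)
  moreover have "\<sigma> ` S = B"
    using \<sigma>_S by (simp add: bij_betw_def)
  ultimately show ?thesis by blast
qed

lemma maxcoh_outcome_flat:
  assumes B: "B \<subseteq> {..<2 ^ n}" "card B = 2 ^ r" and "c \<ge> 0"
    and w: "\<And>a. a < 2 ^ n \<Longrightarrow> w a = (if a \<in> B then complex_of_real c else 0)"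
  shows "maxcoh_outcome n w r"
  unfolding maxcoh_outcome_def
proof (intro impI conjI)
  have "2 ^ r \<le> (2::nat) ^ n"
    using B card_mono[OF finite_lessThan B(1)] by simp
  then show "r \<le> n" by simp
  have "sq_norm (2 ^ n) w = (\<Sum>a<2 ^ n. if a \<in> B then c\<^sup>2 else 0)"
    unfolding sq_norm_def by (intro sum.cong) (auto simp: w)
  also have "\<dots> = 2 ^ r * c\<^sup>2"
    using B by (simp add: sum.If_cases Int_absorb1)
  finally have norm_w: "sq_norm (2 ^ n) w = 2 ^ r * c\<^sup>2" .
  assume "sq_norm (2 ^ n) w > 0"
  then have "c \<noteq> 0" using norm_w by auto
  obtain \<sigma> where \<sigma>: "\<sigma> permutes {..<2 ^ n}" "\<sigma> ` {..<2 ^ r} = B"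
    using permutes_image_eq_equicardinal[of "{..<2 ^ n}" "{..<2 ^ r}" B] B \<open>2 ^ r \<le> 2 ^ n\<close>
    by fastforce
  have \<sigma>_in_B: "\<sigma> y \<in> B \<longleftrightarrow> y < 2 ^ r" if "y < 2 ^ n" for y
  proof
    assume "\<sigma> y \<in> B"
    then obtain z where "z < 2 ^ r" "\<sigma> z = \<sigma> y" using \<sigma>(2) by force
    moreover have "inj \<sigma>" using \<sigma>(1) by (rule permutes_inj)
    ultimately show "y < 2 ^ r" by (metis injD)
  qed (use \<sigma>(2) in blast)
  have sqrt_norm: "sqrt (sq_norm (2 ^ n) w) = sqrt 2 ^ r * c"
    using \<open>c \<ge> 0\<close> by (simp add: norm_w real_sqrt_mult real_sqrt_power[of 2 r])
  have "c / (sqrt 2 ^ r * c) = (1 / sqrt 2) ^ r"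
    using \<open>c \<noteq> 0\<close> by (simp add: power_one_over)
  then have amplitude:
    "complex_of_real c / complex_of_real (sqrt 2 ^ r * c) = complex_of_real ((1 / sqrt 2) ^ r)"
    by (simp only: of_real_divide[symmetric])
  show "\<exists>\<sigma>. \<sigma> permutes {..<2 ^ n} \<and>
      (\<forall>y<2 ^ n. w (\<sigma> y) / complex_of_real (sqrt (sq_norm (2 ^ n) w)) = maxcoh_padded r y)"
  proof (intro exI[of _ \<sigma>] conjI allI impI)
    show "\<sigma> permutes {..<2 ^ n}" by (fact \<sigma>(1))
    fix y :: nat assume y: "y < 2 ^ n"
    then have "\<sigma> y < 2 ^ n" using permutes_in_image[OF \<sigma>(1)] by simp
    then show "w (\<sigma> y) / complex_of_real (sqrt (sq_norm (2 ^ n) w)) = maxcoh_padded r y"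
      using \<sigma>_in_B[OF y] amplitude by (simp add: w sqrt_norm maxcoh_padded_def)
  qed
qed

definition diag_op :: "(nat \<Rightarrow> complex) \<Rightarrow> nat \<Rightarrow> nat \<Rightarrow> complex" where
  "diag_op d = (\<lambda>a c. if c = a then d a else 0)"

lemma op_apply_diag_op: "op_apply N (diag_op d) v a = (if a < N then d a * v a else 0)"
  by (simp add: op_apply_def diag_op_def if_distrib[of "\<lambda>x. x * _"] sum.delta' cong: if_cong)

lemma sq_norm_op_apply_diag_op:
  "sq_norm N (op_apply N (diag_op d) v) = (\<Sum>a<N. (cmod (d a))\<^sup>2 * (cmod (v a))\<^sup>2)"
  unfolding sq_norm_def by (intro sum.cong) (simp_all add: op_apply_diag_op norm_mult power_mult_distrib)

lemma conj_by_diag_op: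
  assumes "a < N" "b < N"
  shows "conj_by N (diag_op d) D a b = d a * D a b * cnj (d b)"
  using assms
  by (simp add: conj_by_def diag_op_def if_distrib[of cnj] if_distrib[of "\<lambda>x. _ * x"]
      if_distrib[of "\<lambda>x. x * _"] sum.delta' cong: if_cong)

lemma incoherent_op_diag_op:
  assumes "\<And>a. a < N \<Longrightarrow> (\<Sum>j<m. (cmod (d j a))\<^sup>2) = 1"
  shows "incoherent_op N m (\<lambda>j. diag_op (d j))"
  unfolding incoherent_op_def kraus_complete_def
proof (intro conjI allI impI)
  fix a b assume ab: "a < N" "b < N"
  have "(\<Sum>i<N. cnj (diag_op (d j) i a) * diag_op (d j) i b)
      = (\<Sum>i<N. if i = a then (if a = b then cnj (d j a) * d j a else 0) else 0)" for j
    by (intro sum.cong) (auto simp: diag_op_def)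
  also have "\<dots> j = (if a = b then complex_of_real ((cmod (d j a))\<^sup>2) else 0)" for j
    using ab by (simp add: mult.commute flip: complex_norm_square)
  finally have "(\<Sum>i<N. cnj (diag_op (d j) i a) * diag_op (d j) i b)
      = (if a = b then complex_of_real ((cmod (d j a))\<^sup>2) else 0)" for j .
  moreover have "(\<Sum>j<m. complex_of_real ((cmod (d j a))\<^sup>2)) = 1"
    using assms[OF ab(1)] by (metis of_real_1 of_real_sum)
  ultimately show "(\<Sum>j<m. \<Sum>i<N. cnj (diag_op (d j) i a) * diag_op (d j) i b) = (if a = b then 1 else 0)"
    by (cases "a = b") simp_all
next
  fix j D assume "is_diag N D"
  then show "is_diag N (conj_by N (diag_op (d j)) D)"
    by (simp add: is_diag_def conj_by_diag_op)
qed

lemma cis_minus_Arg_mult: "cis (- Arg z) * z = complex_of_real (cmod z)"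
proof -
  have "cis (- Arg z) * z = complex_of_real (cmod z) * (cis (- Arg z) * cis (Arg z))"
    by (subst (2) rcis_cmod_Arg[symmetric]) (simp add: rcis_def)
  then show ?thesis by (simp add: cis_mult)
qed

section \<open>Block partitions\<close>

definition block_partition :: "'a set \<Rightarrow> ('a \<Rightarrow> 'a set) \<Rightarrow> ('a \<Rightarrow> nat) \<Rightarrow> bool" where
  "block_partition A blk \<rho> \<longleftrightarrow>
     (\<forall>x\<in>A. x \<in> blk x \<and> blk x \<subseteq> A \<and> card (blk x) = 2 ^ \<rho> x \<and>
        (\<forall>y\<in>blk x. blk y = blk x \<and> \<rho> y = \<rho> x))"

lemma block_partition_Min:
  fixes A :: "'a::linorder set"
  assumes part: "block_partition A blk \<rho>" and "finite A" and x: "x \<in> A"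
  shows "Min (blk x) \<in> blk x" and "blk (Min (blk x)) = blk x" and "\<rho> (Min (blk x)) = \<rho> x"
proof -
  have "x \<in> blk x" "blk x \<subseteq> A" and same: "\<And>y. y \<in> blk x \<Longrightarrow> blk y = blk x \<and> \<rho> y = \<rho> x"
    using part x unfolding block_partition_def by blast+
  have "finite (blk x)" using \<open>blk x \<subseteq> A\<close> \<open>finite A\<close> by (rule finite_subset)
  with \<open>x \<in> blk x\<close> show min_in: "Min (blk x) \<in> blk x" by (intro Min_in) auto
  show "blk (Min (blk x)) = blk x" "\<rho> (Min (blk x)) = \<rho> x" using same[OF min_in] by blast+
qed

lemma block_partition_Min_eq_iff:
  fixes A :: "'a::linorder set"
  assumes part: "block_partition A blk \<rho>" and "finite A" and "x \<in> A" "y \<in> A"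
  shows "Min (blk x) = Min (blk y) \<longleftrightarrow> x \<in> blk y"
proof
  assume "Min (blk x) = Min (blk y)"
  then have "blk (Min (blk x)) = blk (Min (blk y))" by simp
  then have "blk x = blk y"
    using block_partition_Min(2)[OF part \<open>finite A\<close> \<open>x \<in> A\<close>]
      block_partition_Min(2)[OF part \<open>finite A\<close> \<open>y \<in> A\<close>] by simp
  moreover have "x \<in> blk x" using part \<open>x \<in> A\<close> unfolding block_partition_def by blast
  ultimately show "x \<in> blk y" by simp
next
  assume "x \<in> blk y"
  then have "blk x = blk y" using part \<open>y \<in> A\<close> unfolding block_partition_def by blast
  then show "Min (blk x) = Min (blk y)" by simp
qed

lemma div_eq_iff_mem_interval:
  fixes s :: nat
  assumes "0 < s"
  shows "j div s = q \<longleftrightarrow> j \<in> {q * s ..< q * s + s}"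
proof
  assume "j div s = q"
  then show "j \<in> {q * s ..< q * s + s}"
    using div_mult_mod_eq[of j s] mod_less_divisor[OF assms, of j] by auto
next
  assume "j \<in> {q * s ..< q * s + s}"
  then show "j div s = q" by (intro div_nat_eqI) (auto simp: mult.commute)
qed

lemma block_partition_intervals:
  fixes C a :: nat
  defines "F \<equiv> C div 2 ^ a * 2 ^ a"
    and "I \<equiv> \<lambda>j. {j div 2 ^ a * 2 ^ a ..< j div 2 ^ a * 2 ^ a + 2 ^ a}"
  shows "block_partition {..<C} (\<lambda>i. if i < F then I i else {i}) (\<lambda>i. if i < F then a else 0)"
  unfolding block_partition_def
proof (intro ballI conjI)
  fix i assume "i \<in> {..<C}"
  have mem_I: "j \<in> I i \<longleftrightarrow> j div 2 ^ a = i div 2 ^ a" for j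
    unfolding I_def by (rule div_eq_iff_mem_interval[symmetric]) simp
  have lt_F: "j < F \<longleftrightarrow> j div 2 ^ a < C div 2 ^ a" for j
    by (simp add: F_def div_less_iff_less_mult less_mult_imp_div_less)
  have "F \<le> C" by (simp add: F_def)
  have I_lt_F: "j < F" if "i < F" "j \<in> I i" for j
    using that by (simp add: mem_I lt_F)
  show "i \<in> (if i < F then I i else {i})" by (simp add: mem_I)
  show "(if i < F then I i else {i}) \<subseteq> {..<C}"
  proof
    fix j assume "j \<in> (if i < F then I i else {i})"
    then have "j < F \<or> j = i" using I_lt_F by (auto split: if_splits)
    then show "j \<in> {..<C}" using \<open>i \<in> {..<C}\<close> \<open>F \<le> C\<close> by auto
  qed
  show "card (if i < F then I i else {i}) = 2 ^ (if i < F then a else 0)"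
    by (simp add: I_def)
  have same_block: "(if j < F then I j else {j}) = (if i < F then I i else {i}) \<and>
      (if j < F then a else 0) = (if i < F then a else 0 :: nat)"
    if j: "j \<in> (if i < F then I i else {i})" for j
  proof (cases "i < F")
    case True
    then have "j div 2 ^ a = i div 2 ^ a" using j mem_I by simp
    then have "j < F" "I j = I i" using True lt_F by (simp_all add: I_def)
    then show ?thesis using True by simp
  qed (use j in simp)
  then show "(if j < F then I j else {j}) = (if i < F then I i else {i})"
    and "(if j < F then a else 0) = (if i < F then a else 0 :: nat)"
    if "j \<in> (if i < F then I i else {i})" for j
    using that by blast+
qed

lemma block_partition_bij_betw:
  assumes e: "bij_betw e A B" and part: "block_partition A blk \<rho>"
  shows "block_partition B (\<lambda>x. e ` blk (inv_into A e x)) (\<lambda>x. \<rho> (inv_into A e x))"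
  unfolding block_partition_def
proof (intro ballI conjI)
  fix x assume "x \<in> B"
  define i where "i = inv_into A e x"
  have i: "i \<in> A" "e i = x"
    using e \<open>x \<in> B\<close> by (auto simp: i_def bij_betw_def inv_into_into f_inv_into_f)
  have part_i: "i \<in> blk i" "blk i \<subseteq> A" "card (blk i) = 2 ^ \<rho> i"
    "\<And>j. j \<in> blk i \<Longrightarrow> blk j = blk i \<and> \<rho> j = \<rho> i"
    using part i(1) unfolding block_partition_def by blast+
  have inj: "inj_on e A" using e by (rule bij_betw_imp_inj_on)
  show "x \<in> e ` blk (inv_into A e x)" using part_i(1) i by (auto simp: i_def[symmetric])
  show "e ` blk (inv_into A e x) \<subseteq> B"
    using part_i(2) e by (auto simp: i_def[symmetric] bij_betw_def)
  show "card (e ` blk (inv_into A e x)) = 2 ^ \<rho> (inv_into A e x)"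
    using part_i(2,3) inj by (simp add: i_def[symmetric] card_image inj_on_subset)
  fix y assume "y \<in> e ` blk (inv_into A e x)"
  then obtain j where j: "j \<in> blk i" "y = e j" by (auto simp: i_def[symmetric])
  then have "inv_into A e y = j" using part_i(2) inj by (auto intro: inv_into_f_f)
  then show "e ` blk (inv_into A e y) = e ` blk (inv_into A e x)"
    and "\<rho> (inv_into A e y) = \<rho> (inv_into A e x)"
    using part_i(4)[OF j(1)] by (simp_all add: i_def)
qed

lemma exists_block_partition:
  fixes T :: "'a set" and a :: nat
  assumes "finite T"
  shows "\<exists>blk \<rho>. block_partition T blk \<rho> \<and> (\<Sum>x\<in>T. \<rho> x) = a * (card T div 2 ^ a * 2 ^ a)"
proof -
  define F where "F = card T div 2 ^ a * 2 ^ a"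
  define I where "I j = {j div 2 ^ a * 2 ^ a ..< j div 2 ^ a * 2 ^ a + 2 ^ a}" for j :: nat
  define \<rho>I where "\<rho>I i = (if i < F then a else 0)" for i
  obtain e where e: "bij_betw e {..<card T} T"
    using ex_bij_betw_nat_finite[OF assms] by (auto simp: atLeast0LessThan)
  define blk where "blk x = e ` (if inv_into {..<card T} e x < F then I (inv_into {..<card T} e x)
      else {inv_into {..<card T} e x})" for x
  have "block_partition {..<card T} (\<lambda>i. if i < F then I i else {i}) \<rho>I"
    unfolding F_def I_def \<rho>I_def by (rule block_partition_intervals)
  then have "block_partition T blk (\<lambda>x. \<rho>I (inv_into {..<card T} e x))"
    unfolding blk_def by (rule block_partition_bij_betw[OF e])
  moreover have "(\<Sum>x\<in>T. \<rho>I (inv_into {..<card T} e x)) = (\<Sum>i<card T. \<rho>I i)"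
    using bij_betw_inv_into[OF e] by (rule sum.reindex_bij_betw)
  moreover have "(\<Sum>i<card T. \<rho>I i) = a * F"
  proof -
    have "F \<le> card T" by (simp add: F_def)
    then have "{..<card T} \<inter> {i. i < F} = {..<F}" by auto
    then show ?thesis by (simp add: \<rho>I_def sum.If_cases)
  qed
  ultimately show ?thesis unfolding F_def by auto
qed

lemma block_partition_fibres:
  fixes f :: "'a \<Rightarrow> 'b" and a :: "'b \<Rightarrow> nat"
  assumes "finite A"
  shows "\<exists>blk \<rho>. block_partition A blk \<rho> \<and> (\<forall>x\<in>A. \<forall>y\<in>blk x. f y = f x) \<and>
    (\<forall>k. (\<Sum>x\<in>{x\<in>A. f x = k}. \<rho> x) = a k * (card {x\<in>A. f x = k} div 2 ^ a k * 2 ^ a k))"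
proof -
  define T where "T k = {x\<in>A. f x = k}" for k
  have "\<forall>k. \<exists>blk \<rho>. block_partition (T k) blk \<rho> \<and>
      (\<Sum>x\<in>T k. \<rho> x) = a k * (card (T k) div 2 ^ a k * 2 ^ a k)"
    using assms by (auto simp: T_def intro: exists_block_partition)
  then obtain B R where part_T: "\<And>k. block_partition (T k) (B k) (R k)"
    and sum_T: "\<And>k. (\<Sum>x\<in>T k. R k x) = a k * (card (T k) div 2 ^ a k * 2 ^ a k)"
    by metis
  define blk where "blk x = B (f x) x" for x
  define \<rho> where "\<rho> x = R (f x) x" for x
  have at_x: "x \<in> blk x \<and> blk x \<subseteq> A \<and> card (blk x) = 2 ^ \<rho> x \<and>
      (\<forall>y\<in>blk x. blk y = blk x \<and> \<rho> y = \<rho> x \<and> f y = f x)" if "x \<in> A" for x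
  proof -
    have "x \<in> T (f x)" using that by (simp add: T_def)
    then have "x \<in> B (f x) x \<and> B (f x) x \<subseteq> T (f x) \<and> card (B (f x) x) = 2 ^ R (f x) x \<and>
        (\<forall>y\<in>B (f x) x. B (f x) y = B (f x) x \<and> R (f x) y = R (f x) x)"
      using part_T unfolding block_partition_def by blast
    moreover have "f y = f x" if "y \<in> T (f x)" for y using that by (simp add: T_def)
    moreover have "T (f x) \<subseteq> A" by (auto simp: T_def)
    ultimately show ?thesis unfolding blk_def \<rho>_def by (metis subsetD subset_trans)
  qed
  have "block_partition A blk \<rho>"
    unfolding block_partition_def using at_x by blast
  moreover have "\<forall>x\<in>A. \<forall>y\<in>blk x. f y = f x" using at_x by blast
  moreover have "(\<Sum>x\<in>T k. \<rho> x) = a k * (card (T k) div 2 ^ a k * 2 ^ a k)" for k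
    using sum_T[of k] by (simp add: \<rho>_def T_def)
  ultimately show ?thesis unfolding T_def by blast
qed

section \<open>Distillation by measuring the block\<close>

definition distilled_copies ::
    "nat \<Rightarrow> (nat \<Rightarrow> complex) \<Rightarrow> nat \<Rightarrow> (nat \<Rightarrow> nat \<Rightarrow> nat \<Rightarrow> complex) \<Rightarrow> (nat \<Rightarrow> nat) \<Rightarrow> real" where
  "distilled_copies n v m K r = (\<Sum>j<m. sq_norm (2 ^ n) (op_apply (2 ^ n) (K j) v) * real (r j))"

text \<open>Outcome \<open>j\<close> is ``the state lies in the block with least element \<open>j\<close>''; its Kraus operator
  projects onto that block and then removes the phases by a diagonal unitary.\<close>

lemma block_partition_protocol:
  fixes v :: "nat \<Rightarrow> complex"
  assumes part: "block_partition {..<2 ^ n} blk \<rho>"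
    and flat: "\<And>x y. x < 2 ^ n \<Longrightarrow> y \<in> blk x \<Longrightarrow> cmod (v y) = cmod (v x)"
  shows "\<exists>m K r. incoherent_op (2 ^ n) m K \<and>
    (\<forall>j<m. maxcoh_outcome n (op_apply (2 ^ n) (K j) v) (r j)) \<and>
    distilled_copies n v m K r = (\<Sum>a<2 ^ n. (cmod (v a))\<^sup>2 * real (\<rho> a))"
proof -
  define rep where "rep x = Min (blk x)" for x
  have blk_lt: "blk x \<subseteq> {..<2 ^ n}" "card (blk x) = 2 ^ \<rho> x" if "x < 2 ^ n" for x
    using part that unfolding block_partition_def by blast+
  have rep: "rep x \<in> blk x" "rep x < 2 ^ n" "\<rho> (rep x) = \<rho> x" "rep (rep x) = rep x"
    if "x < 2 ^ n" for x
  proof -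
    note Min = block_partition_Min[OF part finite_lessThan, of x, folded rep_def]
    show "rep x \<in> blk x" "\<rho> (rep x) = \<rho> x" using Min that by simp_all
    show "rep x < 2 ^ n" using Min(1) blk_lt(1) that by auto
    show "rep (rep x) = rep x" using Min(2) that by (simp add: rep_def)
  qed
  have rep_eq_iff: "rep a = rep j \<longleftrightarrow> a \<in> blk j" if "a < 2 ^ n" "j < 2 ^ n" for a j
    using block_partition_Min_eq_iff[OF part] that unfolding rep_def by simp
  define d where "d j a = (if a < 2 ^ n \<and> rep a = j then cis (- Arg (v a)) else 0)" for j a
  define K where "K j = diag_op (d j)" for j
  have d_sq: "(cmod (d j a))\<^sup>2 = (if a < 2 ^ n \<and> rep a = j then 1 else 0)" for j a
    by (simp add: d_def)
  have Kv: "op_apply (2 ^ n) (K j) v a =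
      (if a < 2 ^ n \<and> rep a = j then complex_of_real (cmod (v a)) else 0)" for j a
    by (simp add: K_def d_def op_apply_diag_op cis_minus_Arg_mult)
  have "incoherent_op (2 ^ n) (2 ^ n) K"
    unfolding K_def using rep(2) by (intro incoherent_op_diag_op) (simp add: d_sq)
  moreover have "maxcoh_outcome n (op_apply (2 ^ n) (K j) v) (\<rho> j)" for j
  proof (cases "\<exists>a<2 ^ n. rep a = j")
    case True
    then obtain a where a: "a < 2 ^ n" "rep a = j" by blast
    then have j: "j < 2 ^ n" "rep j = j" using rep(2,4) by auto
    show ?thesis
    proof (rule maxcoh_outcome_flat[of "blk j" n "\<rho> j" "cmod (v j)"])
      show "blk j \<subseteq> {..<2 ^ n}" "card (blk j) = 2 ^ \<rho> j"
        using blk_lt j(1) by simp_all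
      fix b :: nat assume "b < 2 ^ n"
      then show "op_apply (2 ^ n) (K j) v b = (if b \<in> blk j then complex_of_real (cmod (v j)) else 0)"
        using rep_eq_iff[OF _ j(1)] j(2) flat[OF j(1)] by (simp add: Kv)
    qed simp
  next
    case False
    then have "sq_norm (2 ^ n) (op_apply (2 ^ n) (K j) v) = 0" by (simp add: sq_norm_def Kv)
    then show ?thesis by (simp add: maxcoh_outcome_def)
  qed
  moreover have "distilled_copies n v (2 ^ n) K \<rho> = (\<Sum>a<2 ^ n. (cmod (v a))\<^sup>2 * real (\<rho> a))"
  proof -
    have "distilled_copies n v (2 ^ n) K \<rho>
        = (\<Sum>j<2 ^ n. \<Sum>a<2 ^ n. (if rep a = j then (cmod (v a))\<^sup>2 * real (\<rho> j) else 0))"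
      unfolding distilled_copies_def K_def sq_norm_op_apply_diag_op d_sq
      by (simp add: sum_distrib_right if_distrib[of "\<lambda>x. x * _"] cong: if_cong)
    also have "\<dots> = (\<Sum>a<2 ^ n. (cmod (v a))\<^sup>2 * real (\<rho> (rep a)))"
      using rep(2) by (subst sum.swap) simp
    also have "\<dots> = (\<Sum>a<2 ^ n. (cmod (v a))\<^sup>2 * real (\<rho> a))"
      using rep(3) by (intro sum.cong) auto
    finally show ?thesis .
  qed
  ultimately show ?thesis by (intro exI[of _ "2 ^ n"] exI[of _ K] exI[of _ \<rho>]) blast
qed

section \<open>Hamming-weight classes of the product state\<close>

definition hamming_weight :: "nat \<Rightarrow> nat \<Rightarrow> nat" where
  "hamming_weight n x = card {k. k < n \<and> qbit x k}"

lemma qbit_iff_mem_set_decode: "qbit x k \<longleftrightarrow> k \<in> set_decode x"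
  by (simp add: qbit_def set_decode_def)

lemma less_power2_iff_set_decode_subset: "x < 2 ^ n \<longleftrightarrow> set_decode x \<subseteq> {..<n}"
proof
  assume x: "x < 2 ^ n"
  show "set_decode x \<subseteq> {..<n}"
  proof
    fix k assume "k \<in> set_decode x"
    then have "0 < x div 2 ^ k" by (simp add: set_decode_def odd_pos)
    then have "2 ^ k \<le> x" by (simp add: div_greater_zero_iff)
    then have "(2::nat) ^ k < 2 ^ n" using x by linarith
    then show "k \<in> {..<n}" by simp
  qed
next
  assume "set_decode x \<subseteq> {..<n}"
  then have "set_encode (set_decode x) \<le> (\<Sum>k<n. 2 ^ k)"
    unfolding set_encode_def by (intro sum_mono2) auto
  also have "(\<Sum>k<n. 2 ^ k) < (2::nat) ^ n"
    using sum_power2[of n] by (simp add: atLeast0LessThan)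
  finally show "x < 2 ^ n" by simp
qed

lemma hamming_weight_eq_card_set_decode:
  assumes "x < 2 ^ n"
  shows "hamming_weight n x = card (set_decode x)"
proof -
  have "{k. k < n \<and> k \<in> set_decode x} = set_decode x"
    using assms by (auto simp: less_power2_iff_set_decode_subset)
  then show ?thesis by (simp add: hamming_weight_def qbit_iff_mem_set_decode)
qed

lemma hamming_weight_le: "hamming_weight n x \<le> n"
  unfolding hamming_weight_def by (rule order_trans[OF card_mono[of "{..<n}"]]) auto

lemma card_hamming_weight_eq: "card {x\<in>{..<2 ^ n}. hamming_weight n x = k} = n choose k"
proof -
  have fin: "finite S" if "S \<subseteq> {..<n}" for S using that finite_subset by blast
  have "bij_betw set_decode {x\<in>{..<2 ^ n}. hamming_weight n x = k} {S. S \<subseteq> {..<n} \<and> card S = k}"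
  proof (rule bij_betw_byWitness[where f' = set_encode])
    show "set_encode ` {S. S \<subseteq> {..<n} \<and> card S = k} \<subseteq> {x\<in>{..<2 ^ n}. hamming_weight n x = k}"
      using fin by (auto simp: less_power2_iff_set_decode_subset hamming_weight_eq_card_set_decode)
  qed (use fin in \<open>auto simp: less_power2_iff_set_decode_subset hamming_weight_eq_card_set_decode\<close>)
  then have "card {x\<in>{..<2 ^ n}. hamming_weight n x = k} = card {S. S \<subseteq> {..<n} \<and> card S = k}"
    by (rule bij_betw_same_card)
  also have "\<dots> = n choose k" by (simp add: n_subsets)
  finally show ?thesis .
qed

lemma prod_state_eq_power:
  "prod_state n \<alpha> \<beta> x = \<beta> ^ hamming_weight n x * \<alpha> ^ (n - hamming_weight n x)"
proof -
  have "card ({..<n} - {k. k < n \<and> qbit x k}) = n - hamming_weight n x"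
    unfolding hamming_weight_def by (subst card_Diff_subset) auto
  moreover have "{..<n} \<inter> - Collect (qbit x) = {..<n} - {k. k < n \<and> qbit x k}" by auto
  ultimately have "card ({..<n} \<inter> - Collect (qbit x)) = n - hamming_weight n x" by simp
  moreover have "{..<n} \<inter> Collect (qbit x) = {k. k < n \<and> qbit x k}" by auto
  ultimately show ?thesis
    by (simp add: prod_state_def prod.If_cases hamming_weight_def)
qed

text \<open>Expected number of distilled copies when the weight-\<open>k\<close> class is cut into blocks of
  \<open>2 ^ a k\<close> states and its remainder is discarded; \<open>p\<close> and \<open>q\<close> are the probabilities of \<open>|1\<rangle>\<close>
  and \<open>|0\<rangle>\<close>.\<close>

definition block_yield :: "real \<Rightarrow> real \<Rightarrow> nat \<Rightarrow> (nat \<Rightarrow> nat) \<Rightarrow> real" where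
  "block_yield p q n a = (\<Sum>k\<le>n. p ^ k * q ^ (n - k) * real (a k * ((n choose k) div 2 ^ a k * 2 ^ a k)))"

lemma prod_state_protocol:
  "\<exists>m K r. incoherent_op (2 ^ n) m K \<and>
    (\<forall>j<m. maxcoh_outcome n (op_apply (2 ^ n) (K j) (prod_state n \<alpha> \<beta>)) (r j)) \<and>
    distilled_copies n (prod_state n \<alpha> \<beta>) m K r = block_yield ((cmod \<beta>)\<^sup>2) ((cmod \<alpha>)\<^sup>2) n a"
proof -
  define T where "T k = {x\<in>{..<2 ^ n}. hamming_weight n x = k}" for k
  have amplitude: "(cmod (prod_state n \<alpha> \<beta> x))\<^sup>2 =
      ((cmod \<beta>)\<^sup>2) ^ hamming_weight n x * ((cmod \<alpha>)\<^sup>2) ^ (n - hamming_weight n x)" for x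
    by (simp add: prod_state_eq_power norm_mult norm_power power_mult_distrib mult.commute flip: power_mult)
  obtain blk \<rho> where part: "block_partition {..<2 ^ n} blk \<rho>"
    and same_weight: "\<forall>x\<in>{..<2 ^ n}. \<forall>y\<in>blk x. hamming_weight n y = hamming_weight n x"
    and class_sum: "\<And>k. (\<Sum>x\<in>T k. \<rho> x) = a k * (card (T k) div 2 ^ a k * 2 ^ a k)"
    using block_partition_fibres[of "{..<2 ^ n}" "hamming_weight n" a] unfolding T_def by blast
  have flat: "cmod (prod_state n \<alpha> \<beta> y) = cmod (prod_state n \<alpha> \<beta> x)"
    if "x < 2 ^ n" "y \<in> blk x" for x y
    using same_weight that by (simp add: prod_state_eq_power norm_mult)
  from block_partition_protocol[where v = "prod_state n \<alpha> \<beta>", OF part flat]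
  obtain m K r where protocol: "incoherent_op (2 ^ n) m K"
    "\<forall>j<m. maxcoh_outcome n (op_apply (2 ^ n) (K j) (prod_state n \<alpha> \<beta>)) (r j)"
    and copies: "distilled_copies n (prod_state n \<alpha> \<beta>) m K r
      = (\<Sum>x<2 ^ n. (cmod (prod_state n \<alpha> \<beta> x))\<^sup>2 * real (\<rho> x))"
    by blast
  have "(\<Sum>x<2 ^ n. (cmod (prod_state n \<alpha> \<beta> x))\<^sup>2 * real (\<rho> x))
      = (\<Sum>k\<le>n. \<Sum>x\<in>T k. (cmod (prod_state n \<alpha> \<beta> x))\<^sup>2 * real (\<rho> x))"
    unfolding T_def by (rule sum.group[symmetric]) (auto simp: hamming_weight_le)
  also have "\<dots> = (\<Sum>k\<le>n. \<Sum>x\<in>T k. ((cmod \<beta>)\<^sup>2) ^ k * ((cmod \<alpha>)\<^sup>2) ^ (n - k) * real (\<rho> x))"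
    by (intro sum.cong refl) (simp add: amplitude T_def)
  also have "\<dots> = block_yield ((cmod \<beta>)\<^sup>2) ((cmod \<alpha>)\<^sup>2) n a"
  proof -
    have "(\<Sum>x\<in>T k. \<rho> x) = a k * ((n choose k) div 2 ^ a k * 2 ^ a k)" for k
      using class_sum[of k] by (simp only: T_def card_hamming_weight_eq)
    then have "(\<Sum>x\<in>T k. real (\<rho> x)) = real (a k * ((n choose k) div 2 ^ a k * 2 ^ a k))" for k
      by (metis of_nat_sum)
    then show ?thesis
      unfolding block_yield_def by (simp add: mult.assoc flip: sum_distrib_left)
  qed
  finally show ?thesis using protocol copies by auto
qed

section \<open>Entropy estimates\<close>

lemma binomial_distribution_sum:
  fixes p q :: real
  assumes "p + q = 1"
  shows "(\<Sum>k\<le>n. real (n choose k) * p ^ k * q ^ (n - k)) = 1"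
  using binomial_ring[of p q n] assms by simp

lemma binomial_distribution_mean:
  fixes p q :: real
  assumes "p + q = 1"
  shows "(\<Sum>k\<le>n. real k * (real (n choose k) * p ^ k * q ^ (n - k))) = real n * p"
proof (cases n)
  case (Suc m)
  have "(\<Sum>k\<le>Suc m. real k * (real (Suc m choose k) * p ^ k * q ^ (Suc m - k)))
      = (\<Sum>k\<le>m. real (Suc k) * (real (Suc m choose Suc k) * p ^ Suc k * q ^ (m - k)))"
    by (subst sum.atMost_Suc_shift) simp
  also have "\<dots> = (\<Sum>k\<le>m. real (Suc m) * p * (real (m choose k) * p ^ k * q ^ (m - k)))"
  proof (intro sum.cong refl)
    fix k
    have choose: "real (Suc k) * real (Suc m choose Suc k) = real (Suc m) * real (m choose k)"
      by (metis Suc_times_binomial of_nat_mult)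
    have "real (Suc k) * (real (Suc m choose Suc k) * p ^ Suc k * q ^ (m - k))
        = (real (Suc k) * real (Suc m choose Suc k)) * p * (p ^ k * q ^ (m - k))"
      by (simp add: algebra_simps)
    then show "real (Suc k) * (real (Suc m choose Suc k) * p ^ Suc k * q ^ (m - k)) =
        real (Suc m) * p * (real (m choose k) * p ^ k * q ^ (m - k))"
      unfolding choose by (simp add: algebra_simps)
  qed
  also have "\<dots> = real (Suc m) * p"
    using binomial_distribution_sum[OF assms, of m] by (simp flip: sum_distrib_left)
  finally show ?thesis using Suc by simp
qed simp

lemma entropy_ge_neg_ln_card:
  fixes P :: "'a \<Rightarrow> real"
  assumes "finite A" and pos: "\<And>x. x \<in> A \<Longrightarrow> P x > 0" and sum1: "(\<Sum>x\<in>A. P x) = 1"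
  shows "(\<Sum>x\<in>A. P x * ln (P x)) \<ge> - ln (card A)"
proof -
  have "A \<noteq> {}" using sum1 by auto
  then have N: "real (card A) > 0" using \<open>finite A\<close> by (simp add: card_gt_0_iff)
  \<comment> \<open>Gibbs' inequality against the uniform distribution, via \<open>ln y \<le> y - 1\<close>.\<close>
  have "- P x * ln (P x) - P x * ln (card A) \<le> 1 / card A - P x" if "x \<in> A" for x
  proof -
    have Px: "P x > 0" using pos that by simp
    have ln_le: "ln (1 / (card A * P x)) \<le> 1 / (card A * P x) - 1"
      using Px N by (intro ln_le_minus_one) simp
    have "- P x * ln (P x) - P x * ln (card A) = P x * ln (1 / (card A * P x))"
      using Px N by (simp add: ln_div ln_mult algebra_simps)
    also have "\<dots> \<le> P x * (1 / (card A * P x) - 1)"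
      using Px ln_le by (intro mult_left_mono) auto
    also have "\<dots> = 1 / card A - P x"
      using Px N by (simp add: field_simps)
    finally show ?thesis .
  qed
  then have "(\<Sum>x\<in>A. - P x * ln (P x) - P x * ln (card A)) \<le> (\<Sum>x\<in>A. 1 / card A - P x)"
    by (rule sum_mono)
  then show ?thesis
    using sum1 N by (simp add: sum_subtractf sum_negf flip: sum_distrib_right)
qed

lemma binomial_log_choose_ge:
  fixes p q :: real
  assumes p: "p > 0" and q: "q > 0" and pq: "p + q = 1"
  shows "(\<Sum>k\<le>n. real (n choose k) * p ^ k * q ^ (n - k) * log 2 (n choose k))
    \<ge> real n * - (p * log 2 p + q * log 2 q) - log 2 (real n + 1)"
proof -
  define P where "P k = real (n choose k) * p ^ k * q ^ (n - k)" for k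
  have Ppos: "P k > 0" if "k \<in> {..n}" for k using that p q by (simp add: P_def)
  have sum1: "(\<Sum>k\<le>n. P k) = 1" using binomial_distribution_sum[OF pq] by (simp add: P_def)
  have mean_k: "(\<Sum>k\<le>n. real k * P k) = real n * p"
    using binomial_distribution_mean[OF pq] by (simp add: P_def)
  have mean_nk: "(\<Sum>k\<le>n. real (n - k) * P k) = real n * q"
  proof -
    have "(\<Sum>k\<le>n. real (n - k) * P k) = (\<Sum>k\<le>n. real n * P k - real k * P k)"
      by (intro sum.cong refl) (simp add: of_nat_diff algebra_simps)
    moreover have "q = 1 - p" using pq by simp
    ultimately show ?thesis
      using sum1 mean_k by (simp add: sum_subtractf right_diff_distrib flip: sum_distrib_left)
  qed
  have log_P: "log 2 (n choose k) = log 2 (P k) - real k * log 2 p - real (n - k) * log 2 q"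
    if "k \<le> n" for k
    using that p q by (simp add: P_def log_mult log_nat_power)
  have "(\<Sum>k\<le>n. P k * log 2 (n choose k))
      = (\<Sum>k\<le>n. P k * log 2 (P k)) - log 2 p * (\<Sum>k\<le>n. real k * P k)
        - log 2 q * (\<Sum>k\<le>n. real (n - k) * P k)"
  proof -
    have "(\<Sum>k\<le>n. P k * log 2 (n choose k)) = (\<Sum>k\<le>n. P k * log 2 (P k)
        - log 2 p * (real k * P k) - log 2 q * (real (n - k) * P k))"
      by (intro sum.cong refl) (simp add: log_P algebra_simps)
    then show ?thesis by (simp add: sum_subtractf sum_distrib_left)
  qed
  also have "\<dots> = (\<Sum>k\<le>n. P k * ln (P k)) / ln 2 + real n * - (p * log 2 p + q * log 2 q)"
    unfolding mean_k mean_nk by (simp add: log_def sum_divide_distrib algebra_simps)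
  finally have "(\<Sum>k\<le>n. P k * log 2 (n choose k))
      = (\<Sum>k\<le>n. P k * ln (P k)) / ln 2 + real n * - (p * log 2 p + q * log 2 q)" .
  moreover have "- ln (real n + 1) \<le> (\<Sum>k\<le>n. P k * ln (P k))"
    using entropy_ge_neg_ln_card[of "{..n}" P] Ppos sum1 by (simp add: add.commute)
  then have "- ln (real n + 1) / ln 2 \<le> (\<Sum>k\<le>n. P k * ln (P k)) / ln 2"
    by (rule divide_right_mono) simp
  moreover have "log 2 (real n + 1) = ln (real n + 1) / ln 2" by (simp add: log_def)
  ultimately show ?thesis unfolding P_def by linarith
qed

lemma floor_log_blocks_ge:
  fixes C t :: nat
  assumes "C > 0"
  defines "s \<equiv> floor_log C - t"
  shows "real C * (1 - 1 / 2 ^ t) * (log 2 C - t - 1) \<le> real (s * (C div 2 ^ s * 2 ^ s))"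
proof (cases "log 2 C - t - 1 \<le> 0")
  case True
  then have "real C * (1 - 1 / 2 ^ t) * (log 2 C - t - 1) \<le> 0"
    by (intro mult_nonneg_nonpos) auto
  then show ?thesis using of_nat_0_le_iff[of "s * (C div 2 ^ s * 2 ^ s)"] by linarith
next
  case False
  define b where "b = floor_log C"
  have "real C < 2 * 2 ^ b"
    unfolding b_def using floor_log_exp2_gt[of C] by (metis of_nat_less_iff of_nat_numeral of_nat_mult of_nat_power)
  then have log_C: "log 2 C < b + 1"
    using assms(1) by (simp add: log_less_iff powr_add powr_realpow)
  with False have "t \<le> b" by linarith
  then have "s + t = b" by (simp add: s_def b_def)
  then have "2 ^ s * 2 ^ t \<le> C"
    using floor_log_exp2_le[OF assms(1)] by (simp add: b_def flip: power_add)
  then have "real (2 ^ s * 2 ^ t) \<le> real C" by (simp only: of_nat_le_iff)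
  then have small_rest: "real (2 ^ s) \<le> real C / 2 ^ t" by (simp add: field_simps)
  have "C mod 2 ^ s < 2 ^ s" by simp
  then have "C \<le> C div 2 ^ s * 2 ^ s + 2 ^ s"
    using div_mult_mod_eq[of C "2 ^ s"] by linarith
  \<comment> \<open>At most a \<open>2^-t\<close> fraction of the \<open>C\<close> elements is left over after cutting into blocks of \<open>2^s\<close>.\<close>
  then have "real C \<le> real (C div 2 ^ s * 2 ^ s) + real (2 ^ s)"
    by (metis of_nat_add of_nat_le_iff)
  moreover have "real C * (1 - 1 / 2 ^ t) = real C - real C / 2 ^ t"
    by (simp add: algebra_simps)
  ultimately have "real C * (1 - 1 / 2 ^ t) \<le> real (C div 2 ^ s * 2 ^ s)"
    using small_rest by linarith
  moreover have "log 2 C - t - 1 \<le> real s" using log_C \<open>s + t = b\<close> by linarith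
  ultimately have "real C * (1 - 1 / 2 ^ t) * (log 2 C - t - 1) \<le> real (C div 2 ^ s * 2 ^ s) * real s"
    using False by (intro mult_mono) auto
  then show ?thesis by (simp add: mult.commute)
qed

lemma block_yield_floor_log_ge:
  fixes p q :: real and n t :: nat
  assumes p: "p > 0" and q: "q > 0" and pq: "p + q = 1"
  shows "(1 - 1 / 2 ^ t) * (real n * - (p * log 2 p + q * log 2 q) - log 2 (real n + 1) - t - 1)
    \<le> block_yield p q n (\<lambda>k. floor_log (n choose k) - t)"
proof -
  define P where "P k = real (n choose k) * p ^ k * q ^ (n - k)" for k
  define H where "H = - (p * log 2 p + q * log 2 q)"
  have "(1 - 1 / 2 ^ t) * (real n * H - log 2 (real n + 1) - t - 1)
      \<le> (1 - 1 / 2 ^ t) * ((\<Sum>k\<le>n. P k * log 2 (n choose k)) - (t + 1) * (\<Sum>k\<le>n. P k))"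
    using binomial_log_choose_ge[OF p q pq, of n] binomial_distribution_sum[OF pq, of n]
    by (intro mult_left_mono) (simp_all add: P_def H_def)
  also have "\<dots> = (\<Sum>k\<le>n. p ^ k * q ^ (n - k) *
      (real (n choose k) * (1 - 1 / 2 ^ t) * (log 2 (n choose k) - t - 1)))"
  proof -
    have "(\<Sum>k\<le>n. p ^ k * q ^ (n - k) *
        (real (n choose k) * (1 - 1 / 2 ^ t) * (log 2 (n choose k) - t - 1)))
      = (\<Sum>k\<le>n. (1 - 1 / 2 ^ t) * (P k * log 2 (n choose k) - (t + 1) * P k))"
      by (intro sum.cong refl) (simp add: P_def algebra_simps add_divide_distrib)
    also have "\<dots> = (1 - 1 / 2 ^ t) * ((\<Sum>k\<le>n. P k * log 2 (n choose k)) - (t + 1) * (\<Sum>k\<le>n. P k))"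
      by (simp add: sum_subtractf flip: sum_distrib_left)
    finally show ?thesis by (rule sym)
  qed
  also have "\<dots> \<le> block_yield p q n (\<lambda>k. floor_log (n choose k) - t)"
    unfolding block_yield_def
    using p q by (intro sum_mono mult_left_mono floor_log_blocks_ge) auto
  finally show ?thesis by (simp add: H_def)
qed

lemma block_yield_asymptotically_ge:
  fixes p q \<epsilon> :: real
  assumes p: "p > 0" and q: "q > 0" and pq: "p + q = 1" and eps: "\<epsilon> > 0"
  shows "\<exists>n0. \<forall>n\<ge>n0. \<exists>a. real n * (- (p * log 2 p + q * log 2 q) - \<epsilon>) \<le> block_yield p q n a"
proof -
  define H where "H = - (p * log 2 p + q * log 2 q)"
  have "log 2 p \<le> 0" "log 2 q \<le> 0" using p q pq by simp_all
  then have "p * log 2 p \<le> 0" "q * log 2 q \<le> 0" using p q by (simp_all add: mult_nonneg_nonpos)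
  then have "H \<ge> 0" by (simp add: H_def)
  obtain t :: nat where "2 * (H + 1) / \<epsilon> < 2 ^ t" using real_arch_pow[of 2] by auto
  then have \<delta>H: "H / 2 ^ t \<le> \<epsilon> / 2" using eps \<open>H \<ge> 0\<close> by (simp add: field_simps)
  have "((\<lambda>n::nat. (log 2 (real n + 1) + t + 1) / real n) \<longlongrightarrow> 0) at_top"
    by real_asymp
  from order_tendstoD(2)[OF this, of "\<epsilon> / 2"]
  have "\<forall>\<^sub>F n in sequentially. (log 2 (real n + 1) + t + 1) / real n < \<epsilon> / 2"
    using eps by (simp only: half_gt_zero)
  moreover have "\<forall>\<^sub>F n in sequentially. n > (0::nat)" by (rule eventually_gt_at_top)
  ultimately have "\<forall>\<^sub>F n in sequentially. log 2 (real n + 1) + t + 1 \<le> real n * (\<epsilon> / 2)"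
    by eventually_elim (simp add: field_simps)
  then obtain n0 where n0: "\<And>n. n \<ge> n0 \<Longrightarrow> log 2 (real n + 1) + t + 1 \<le> real n * (\<epsilon> / 2)"
    by (auto simp: eventually_sequentially)
  have "real n * (H - \<epsilon>) \<le> block_yield p q n (\<lambda>k. floor_log (n choose k) - t)" if "n \<ge> n0" for n
  proof -
    define L where "L = log 2 (real n + 1) + t + 1"
    define D :: real where "D = 2 ^ t"
    have "real n * (H / D) \<le> real n * (\<epsilon> / 2)" using \<delta>H by (intro mult_left_mono) (auto simp: D_def)
    moreover have "L \<le> real n * (\<epsilon> / 2)" using n0[OF that] by (simp add: L_def)
    moreover have "real n * (H - \<epsilon>) = real n * H - 2 * (real n * (\<epsilon> / 2))"
      by (simp add: algebra_simps)
    ultimately have "real n * (H - \<epsilon>) \<le> real n * H - L - real n * (H / D)"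
      by linarith
    also have "\<dots> \<le> real n * H - L - real n * (H / D) + L / D"
      by (simp add: L_def D_def)
    also have "\<dots> = (1 - 1 / D) * (real n * H - L)"
      by (simp add: D_def field_simps)
    also have "\<dots> = (1 - 1 / 2 ^ t) * (real n * H - log 2 (real n + 1) - t - 1)"
      by (simp add: L_def D_def algebra_simps)
    also have "\<dots> \<le> block_yield p q n (\<lambda>k. floor_log (n choose k) - t)"
      using block_yield_floor_log_ge[OF p q pq] by (simp add: H_def)
    finally show ?thesis .
  qed
  then show ?thesis unfolding H_def by blast
qed

lemma R_I_qubit_vec:
  "R_I 2 (qubit_vec \<alpha> \<beta>) =
    - ((if \<alpha> = 0 then 0 else (cmod \<alpha>)\<^sup>2 * log 2 ((cmod \<alpha>)\<^sup>2)) +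
       (if \<beta> = 0 then 0 else (cmod \<beta>)\<^sup>2 * log 2 ((cmod \<beta>)\<^sup>2)))"
  by (simp add: R_I_def qubit_vec_def numeral_2_eq_2 lessThan_Suc)

lemma block_yield_coherence_asymptotically_ge:
  fixes \<alpha> \<beta> :: complex and \<epsilon> :: real
  assumes norm: "(cmod \<alpha>)\<^sup>2 + (cmod \<beta>)\<^sup>2 = 1" and eps: "\<epsilon> > 0"
  shows "\<exists>n0. \<forall>n\<ge>n0. \<exists>a.
    real n * (R_I 2 (qubit_vec \<alpha> \<beta>) - \<epsilon>) \<le> block_yield ((cmod \<beta>)\<^sup>2) ((cmod \<alpha>)\<^sup>2) n a"
proof (cases "\<alpha> = 0 \<or> \<beta> = 0")
  case True
  then have "R_I 2 (qubit_vec \<alpha> \<beta>) = 0"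
    using norm by (auto simp: R_I_qubit_vec)
  then have "real n * (R_I 2 (qubit_vec \<alpha> \<beta>) - \<epsilon>) \<le> block_yield ((cmod \<beta>)\<^sup>2) ((cmod \<alpha>)\<^sup>2) n (\<lambda>_. 0)"
    for n using eps by (simp add: block_yield_def mult_nonneg_nonpos)
  then show ?thesis by blast
next
  case False
  then have "R_I 2 (qubit_vec \<alpha> \<beta>) =
      - ((cmod \<beta>)\<^sup>2 * log 2 ((cmod \<beta>)\<^sup>2) + (cmod \<alpha>)\<^sup>2 * log 2 ((cmod \<alpha>)\<^sup>2))"
    by (simp add: R_I_qubit_vec)
  moreover have "(cmod \<beta>)\<^sup>2 + (cmod \<alpha>)\<^sup>2 = 1" using norm by simp
  ultimately show ?thesis
    using False block_yield_asymptotically_ge[of "(cmod \<beta>)\<^sup>2" "(cmod \<alpha>)\<^sup>2" \<epsilon>] eps by simp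
qed

theorem mainTheorem8:
  fixes \<alpha> \<beta> :: complex and \<epsilon> :: real
  assumes norm: "(cmod \<alpha>)\<^sup>2 + (cmod \<beta>)\<^sup>2 = 1"
    and eps: "\<epsilon> > 0"
  shows "\<exists>n0::nat. \<forall>n\<ge>n0. \<exists>(m::nat) (K :: nat \<Rightarrow> nat \<Rightarrow> nat \<Rightarrow> complex) (r :: nat \<Rightarrow> nat).
    incoherent_op (2 ^ n) m K \<and>
    (\<forall>j<m. sq_norm (2 ^ n) (op_apply (2 ^ n) (K j) (prod_state n \<alpha> \<beta>)) > 0 \<longrightarrow>
       r j \<le> n \<and>
       (\<exists>\<sigma>. \<sigma> permutes {..<2 ^ n} \<and>
          (\<forall>y<2 ^ n. op_apply (2 ^ n) (K j) (prod_state n \<alpha> \<beta>) (\<sigma> y)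
                / complex_of_real (sqrt (sq_norm (2 ^ n) (op_apply (2 ^ n) (K j) (prod_state n \<alpha> \<beta>))))
             = maxcoh_padded (r j) y))) \<and>
    (\<Sum>j<m. sq_norm (2 ^ n) (op_apply (2 ^ n) (K j) (prod_state n \<alpha> \<beta>)) * real (r j))
       \<ge> real n * (R_I 2 (qubit_vec \<alpha> \<beta>) - \<epsilon>)"
proof -
  obtain n0 where n0: "\<And>n. n \<ge> n0 \<Longrightarrow> \<exists>a.
      real n * (R_I 2 (qubit_vec \<alpha> \<beta>) - \<epsilon>) \<le> block_yield ((cmod \<beta>)\<^sup>2) ((cmod \<alpha>)\<^sup>2) n a"
    using block_yield_coherence_asymptotically_ge[OF norm eps] by blast
  have "\<exists>m K r. incoherent_op (2 ^ n) m K \<and>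
      (\<forall>j<m. maxcoh_outcome n (op_apply (2 ^ n) (K j) (prod_state n \<alpha> \<beta>)) (r j)) \<and>
      distilled_copies n (prod_state n \<alpha> \<beta>) m K r \<ge> real n * (R_I 2 (qubit_vec \<alpha> \<beta>) - \<epsilon>)"
    if n: "n \<ge> n0" for n
  proof -
    obtain a where "real n * (R_I 2 (qubit_vec \<alpha> \<beta>) - \<epsilon>)
        \<le> block_yield ((cmod \<beta>)\<^sup>2) ((cmod \<alpha>)\<^sup>2) n a"
      using n0[OF n] by blast
    moreover obtain m K r where "incoherent_op (2 ^ n) m K"
      and "\<forall>j<m. maxcoh_outcome n (op_apply (2 ^ n) (K j) (prod_state n \<alpha> \<beta>)) (r j)"
      and "distilled_copies n (prod_state n \<alpha> \<beta>) m K r = block_yield ((cmod \<beta>)\<^sup>2) ((cmod \<alpha>)\<^sup>2) n a"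
      using prod_state_protocol by blast
    ultimately show ?thesis by (intro exI[of _ m] exI[of _ K] exI[of _ r]) simp
  qed
  then show ?thesis
    unfolding maxcoh_outcome_def distilled_copies_def by (rule exI[of _ n0, OF allI, OF impI])
qed

end
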